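(* Let $q$ be a prime power and let $\mathbf{G}\in\mathbb{F}_q^{k\times n}$ be a generator matrix of a linear $[n,k]_q$ code. Consider a coded storage system with files $f_1,\dots,f_k$ in which, for each $i\in[k]$, file $f_i$ has a given list $\mathcal{R}_i=(R_{i,1},\dots,R_{i,t_i})$ of $t_i\ge1$ recovery sets, each of size $1$ or $2$, and all servers have service rate $1$. Let $G$ be the graph representation of the code. Then $m(G)\le\lambda^\star(\mathbf{G})=m_f(G)\le v(G)$.
   Context: Let $\mathbf{g}_1,\dots,\mathbf{g}_n$ be the columns of $\mathbf{G}$ and $\mathbf{e}_i$ the $i$-th unit vector. A set $R\subseteq[n]$ is a recovery set for file $f_i$ if there exist nonzero $\alpha_j\in\mathbb{F}_q$ ($j\in R$) with $\sum_{j\in R}\alpha_j\mathbf{g}_j=\mathbf{e}_i$. The service rate region $\mathcal{S}(\mathbf{G})$ is the set of $\boldsymbol{\lambda}\in\mathbb{R}^k$ for which there exist real $\lambda_{i,j}\ge0$ with $\sum_{j=1}^{t_i}\lambda_{i,j}=\lambda_i$ for all $i$ and $\sum_{i=1}^k\sum_{j\in[t_i]:\,l\in R_{i,j}}\lambda_{i,j}\le1$ for every server $l\in[n]$. The service capacity is $\lambda^\star(\mathbf{G})=\max\{\sum_{i=1}^k\lambda_i:\boldsymbol{\lambda}\in\mathcal{S}(\mathbf{G})\}$. The graph representation $G$ is the (multi)graph with vertex set $[n]$ plus one new dummy vertex $d_{i,j}$ for each recovery set $R_{i,j}$ of size 1, and edges indexed by $(i,j)$: if $R_{i,j}=\{a,b\}$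 the edge joins $a$ and $b$; if $R_{i,j}=\{r\}$ it joins $r$ and $d_{i,j}$. $m(G)$ is the maximum number of pairwise non-adjacent edges (matching number); $m_f(G)$ is the maximum of $\sum_e x_e$ over assignments $x_e\in[0,1]$ with the sum over edges incident to each vertex at most 1 (fractional matching number); $v(G)$ is the minimum size of a vertex set meeting every edge (vertex cover number). *)

theory Defs
  imports Main "HOL-Library.Extended_Real"
begin

text \<open>Conventions: files are indexed by i < k (0-based), servers by l < n (0-based),
  recovery sets of file i by j < t i.  The generator matrix is Gm :: nat => nat => 'a,
  entry Gm r c for row r < k and column c < n, over a finite field 'a (so |'a| = q is
  a prime power).\<close>

definition generator_matrix :: "nat \<Rightarrow> nat \<Rightarrow> (nat \<Rightarrow> nat \<Rightarrow> 'a::field) \<Rightarrow> bool" where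
  "generator_matrix k n Gm \<longleftrightarrow>
     (\<forall>c::nat\<Rightarrow>'a. (\<forall>l<n. (\<Sum>r<k. c r * Gm r l) = 0) \<longrightarrow> (\<forall>r<k. c r = 0))"

definition is_recovery_set :: "nat \<Rightarrow> nat \<Rightarrow> (nat \<Rightarrow> nat \<Rightarrow> 'a::field) \<Rightarrow> nat \<Rightarrow> nat set \<Rightarrow> bool" where
  "is_recovery_set k n Gm i R \<longleftrightarrow> R \<subseteq> {..<n} \<and>
     (\<exists>\<alpha>::nat\<Rightarrow>'a. (\<forall>l\<in>R. \<alpha> l \<noteq> 0) \<and>
        (\<forall>r<k. (\<Sum>l\<in>R. \<alpha> l * Gm r l) = (if r = i then 1 else 0)))"

definition service_rate_region ::
  "nat \<Rightarrow> nat \<Rightarrow> (nat \<Rightarrow> nat) \<Rightarrow> (nat \<Rightarrow> nat \<Rightarrow> nat set) \<Rightarrow> (nat \<Rightarrow> real) set" where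
  "service_rate_region k n t R = {lam. \<exists>lij::nat\<Rightarrow>nat\<Rightarrow>real.
      (\<forall>i<k. \<forall>j<t i. lij i j \<ge> 0) \<and>
      (\<forall>i<k. (\<Sum>j<t i. lij i j) = lam i) \<and>
      (\<forall>l<n. (\<Sum>i<k. \<Sum>j\<in>{j. j < t i \<and> l \<in> R i j}. lij i j) \<le> 1)}"

definition service_capacity ::
  "nat \<Rightarrow> nat \<Rightarrow> (nat \<Rightarrow> nat) \<Rightarrow> (nat \<Rightarrow> nat \<Rightarrow> nat set) \<Rightarrow> real" where
  "service_capacity k n t R =
     (GREATEST s. \<exists>lam\<in>service_rate_region k n t R. s = (\<Sum>i<k. lam i))"

text \<open>Graph representation: vertices are servers Inl l (l < n) and dummy vertices
  Inr (i,j) for recovery sets of size 1; edges are indexed by (i,j).\<close>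
type_synonym vtx = "nat + (nat \<times> nat)"

definition gr_edges :: "nat \<Rightarrow> (nat \<Rightarrow> nat) \<Rightarrow> (nat \<times> nat) set" where
  "gr_edges k t = {(i,j). i < k \<and> j < t i}"

definition gr_ends :: "(nat \<Rightarrow> nat \<Rightarrow> nat set) \<Rightarrow> nat \<times> nat \<Rightarrow> vtx set" where
  "gr_ends R e = Inl ` R (fst e) (snd e) \<union> (if card (R (fst e) (snd e)) = 1 then {Inr e} else {})"

definition gr_vertices :: "nat \<Rightarrow> nat \<Rightarrow> (nat \<Rightarrow> nat) \<Rightarrow> (nat \<Rightarrow> nat \<Rightarrow> nat set) \<Rightarrow> vtx set" where
  "gr_vertices k n t R = Inl ` {..<n} \<union> {Inr e | e. e \<in> gr_edges k t \<and> card (R (fst e) (snd e)) = 1}"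

definition is_matching :: "nat \<Rightarrow> (nat \<Rightarrow> nat) \<Rightarrow> (nat \<Rightarrow> nat \<Rightarrow> nat set) \<Rightarrow> (nat \<times> nat) set \<Rightarrow> bool" where
  "is_matching k t R M \<longleftrightarrow> M \<subseteq> gr_edges k t \<and>
     (\<forall>e\<in>M. \<forall>e'\<in>M. e \<noteq> e' \<longrightarrow> gr_ends R e \<inter> gr_ends R e' = {})"

definition matching_number :: "nat \<Rightarrow> (nat \<Rightarrow> nat) \<Rightarrow> (nat \<Rightarrow> nat \<Rightarrow> nat set) \<Rightarrow> nat" where
  "matching_number k t R = Max {card M | M. is_matching k t R M}"

definition is_fractional_matching ::
  "nat \<Rightarrow> nat \<Rightarrow> (nat \<Rightarrow> nat) \<Rightarrow> (nat \<Rightarrow> nat \<Rightarrow> nat set) \<Rightarrow> (nat \<times> nat \<Rightarrow> real) \<Rightarrow> bool" where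
  "is_fractional_matching k n t R x \<longleftrightarrow>
     (\<forall>e\<in>gr_edges k t. 0 \<le> x e \<and> x e \<le> 1) \<and>
     (\<forall>v\<in>gr_vertices k n t R. (\<Sum>e\<in>{e\<in>gr_edges k t. v \<in> gr_ends R e}. x e) \<le> 1)"

definition fractional_matching_number ::
  "nat \<Rightarrow> nat \<Rightarrow> (nat \<Rightarrow> nat) \<Rightarrow> (nat \<Rightarrow> nat \<Rightarrow> nat set) \<Rightarrow> real" where
  "fractional_matching_number k n t R =
     (GREATEST s. \<exists>x. is_fractional_matching k n t R x \<and> s = (\<Sum>e\<in>gr_edges k t. x e))"

definition is_vertex_cover ::
  "nat \<Rightarrow> nat \<Rightarrow> (nat \<Rightarrow> nat) \<Rightarrow> (nat \<Rightarrow> nat \<Rightarrow> nat set) \<Rightarrow> vtx set \<Rightarrow> bool" where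
  "is_vertex_cover k n t R C \<longleftrightarrow> C \<subseteq> gr_vertices k n t R \<and>
     (\<forall>e\<in>gr_edges k t. gr_ends R e \<inter> C \<noteq> {})"

definition vertex_cover_number :: "nat \<Rightarrow> nat \<Rightarrow> (nat \<Rightarrow> nat) \<Rightarrow> (nat \<Rightarrow> nat \<Rightarrow> nat set) \<Rightarrow> nat" where
  "vertex_cover_number k n t R = Min {card C | C. is_vertex_cover k n t R C}"

end

theory Submission
  imports Defs "HOL-Analysis.Analysis"
begin

text \<open>A choice of rates \<open>\<lambda>\<^sub>i\<^sub>,\<^sub>j\<close> for the recovery sets is literally a weighting of the edges of
  the graph representation, and the server constraints are the vertex constraints of a
  fractional matching (the constraint at a dummy vertex only says \<open>\<lambda>\<^sub>i\<^sub>,\<^sub>j \<le> 1\<close>, which already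
  follows from the constraint at a server of the nonempty set \<open>R\<^sub>i\<^sub>,\<^sub>j\<close>). Hence the service
  capacity is the fractional matching number. The outer inequalities are the usual
  sandwich: the indicator of a matching is a fractional matching, and summing the vertex
  constraints over a vertex cover bounds the weight of every fractional matching (weak LP
  duality). The maximum defining the fractional matching number exists because the
  fractional matchings supported on the finitely many edges form a compact set.\<close>

lemma gr_edges_eq_Sigma: "gr_edges k t = Sigma {..<k} (\<lambda>i. {..<t i})"
  by (auto simp: gr_edges_def)

lemma finite_gr_edges: "finite (gr_edges k t)"
  by (simp add: gr_edges_eq_Sigma)

lemma sum_gr_edges: "sum x (gr_edges k t) = (\<Sum>i<k. \<Sum>j<t i. x (i, j))"
  by (simp add: gr_edges_eq_Sigma sum.Sigma)

lemma Inl_in_gr_ends_iff: "Inl l \<in> gr_ends R e \<longleftrightarrow> l \<in> R (fst e) (snd e)"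
  by (auto simp: gr_ends_def)

lemma Inr_in_gr_ends_iff: "Inr e' \<in> gr_ends R e \<longleftrightarrow> e' = e \<and> card (R (fst e) (snd e)) = 1"
  by (auto simp: gr_ends_def)

lemma sum_edges_at_server:
  "sum x {e \<in> gr_edges k t. Inl l \<in> gr_ends R e}
     = (\<Sum>i<k. \<Sum>j\<in>{j. j < t i \<and> l \<in> R i j}. x (i, j))"
proof -
  have "{e \<in> gr_edges k t. Inl l \<in> gr_ends R e} = Sigma {..<k} (\<lambda>i. {j. j < t i \<and> l \<in> R i j})"
    by (auto simp: gr_edges_def Inl_in_gr_ends_iff)
  then show ?thesis by (simp add: sum.Sigma)
qed

lemma edges_at_dummy_vertex:
  assumes "Inr e' \<in> gr_vertices k n t R"
  shows "{e \<in> gr_edges k t. Inr e' \<in> gr_ends R e} = {e'}"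
  using assms by (auto simp: gr_vertices_def Inr_in_gr_ends_iff)

lemma finite_gr_vertices: "finite (gr_vertices k n t R)"
proof -
  have "gr_vertices k n t R \<subseteq> Inl ` {..<n} \<union> Inr ` gr_edges k t"
    by (auto simp: gr_vertices_def)
  then show ?thesis
    using finite_gr_edges finite_subset by blast
qed

lemma compact_box_with_sum_constraints:
  fixes B :: "'e \<Rightarrow> real set" and S :: "'v \<Rightarrow> 'e set"
  assumes "\<And>e. compact (B e)"
  shows "compact {x. (\<forall>e. x e \<in> B e) \<and> (\<forall>v\<in>V. sum x (S v) \<le> a)}"
proof -
  have "compactin (product_topology (\<lambda>_. euclidean) UNIV) (PiE UNIV B)"
    using assms by (subst compactin_PiE) auto
  then have box: "compact (PiE UNIV B)"
    by (simp add: euclidean_product_topology)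
  have "closed (\<Inter>v\<in>V. {x :: 'e \<Rightarrow> real. sum x (S v) \<le> a})"
    by (intro closed_INT ballI closed_Collect_le continuous_on_sum continuous_on_const) simp
  moreover have "{x. (\<forall>e. x e \<in> B e) \<and> (\<forall>v\<in>V. sum x (S v) \<le> a)}
      = PiE UNIV B \<inter> (\<Inter>v\<in>V. {x. sum x (S v) \<le> a})"
    by (auto simp: PiE_iff)
  ultimately show ?thesis
    using compact_Int_closed[OF box] by simp
qed

lemma ex_maximum_fractional_matching:
  obtains x where "is_fractional_matching k n t R x"
    and "\<And>y. is_fractional_matching k n t R y \<Longrightarrow> sum y (gr_edges k t) \<le> sum x (gr_edges k t)"
proof -
  define E where "E = gr_edges k t"
  define S where "S = (\<lambda>v. {e \<in> E. v \<in> gr_ends R e})"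
  define F where "F = {x :: nat \<times> nat \<Rightarrow> real. (\<forall>e. x e \<in> (if e \<in> E then {0..1} else {0}))
                                              \<and> (\<forall>v\<in>gr_vertices k n t R. sum x (S v) \<le> 1)}"
  have fm_iff: "is_fractional_matching k n t R x \<longleftrightarrow>
      (\<forall>e\<in>E. 0 \<le> x e \<and> x e \<le> 1) \<and> (\<forall>v\<in>gr_vertices k n t R. sum x (S v) \<le> 1)" for x
    by (simp add: is_fractional_matching_def E_def S_def)
  have restrict: "(\<lambda>e. if e \<in> E then y e else 0) \<in> F" "sum (\<lambda>e. if e \<in> E then y e else 0) E = sum y E"
    if "is_fractional_matching k n t R y" for y
  proof -
    have "sum (\<lambda>e. if e \<in> E then y e else 0) (S v) = sum y (S v)" for v
      by (intro sum.cong) (auto simp: S_def)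
    then show "(\<lambda>e. if e \<in> E then y e else 0) \<in> F"
      using that by (auto simp: F_def fm_iff)
  qed simp
  have "compact F"
    unfolding F_def by (rule compact_box_with_sum_constraints) simp
  moreover have "(\<lambda>_. 0) \<in> F"
    by (simp add: F_def)
  moreover have "continuous_on F (\<lambda>x. sum x E)"
    by (intro continuous_on_sum continuous_on_subset[OF continuous_on_product_coordinates]) simp
  ultimately obtain x where "x \<in> F" and x_max: "\<And>y. y \<in> F \<Longrightarrow> sum y E \<le> sum x E"
    using continuous_attains_sup by (metis empty_iff)
  show thesis
  proof (rule that)
    show "is_fractional_matching k n t R x"
      using \<open>x \<in> F\<close> by (auto simp: F_def fm_iff split: if_splits)
  next
    fix y
    assume "is_fractional_matching k n t R y"
    then show "sum y (gr_edges k t) \<le> sum x (gr_edges k t)"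
      using restrict x_max unfolding E_def by fastforce
  qed
qed

lemma fractional_matching_number_attained:
  obtains x where "is_fractional_matching k n t R x"
    and "fractional_matching_number k n t R = sum x (gr_edges k t)"
    and "\<And>y. is_fractional_matching k n t R y \<Longrightarrow> sum y (gr_edges k t) \<le> sum x (gr_edges k t)"
proof -
  obtain x where "is_fractional_matching k n t R x"
    and "\<And>y. is_fractional_matching k n t R y \<Longrightarrow> sum y (gr_edges k t) \<le> sum x (gr_edges k t)"
    using ex_maximum_fractional_matching[of k n t R] by blast
  moreover from this have "fractional_matching_number k n t R = sum x (gr_edges k t)"
    unfolding fractional_matching_number_def by (intro Greatest_equality) auto
  ultimately show thesis
    using that by blast
qed

lemma sum_le_fractional_matching_number:
  assumes "is_fractional_matching k n t R y"
  shows "sum y (gr_edges k t) \<le> fractional_matching_number k n t R"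
proof -
  obtain x where "fractional_matching_number k n t R = sum x (gr_edges k t)"
    and "\<And>y. is_fractional_matching k n t R y \<Longrightarrow> sum y (gr_edges k t) \<le> sum x (gr_edges k t)"
    using fractional_matching_number_attained[of k n t R] by blast
  with assms show ?thesis
    by simp
qed

lemma service_rates_of_fractional_matching:
  assumes "is_fractional_matching k n t R x"
  shows "(\<lambda>i. \<Sum>j<t i. x (i, j)) \<in> service_rate_region k n t R"
  unfolding service_rate_region_def
proof (intro CollectI exI conjI allI impI)
  fix i j
  assume "i < k" "j < t i"
  then show "0 \<le> x (i, j)"
    using assms by (simp add: is_fractional_matching_def gr_edges_def)
next
  fix l
  assume "l < n"
  then have "Inl l \<in> gr_vertices k n t R"
    by (simp add: gr_vertices_def)
  then show "(\<Sum>i<k. \<Sum>j\<in>{j. j < t i \<and> l \<in> R i j}. x (i, j)) \<le> 1"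
    using assms by (simp add: is_fractional_matching_def flip: sum_edges_at_server)
qed simp

lemma fractional_matching_of_service_rates:
  assumes servers: "\<And>i j. i < k \<Longrightarrow> j < t i \<Longrightarrow> R i j \<noteq> {} \<and> R i j \<subseteq> {..<n}"
    and lam: "lam \<in> service_rate_region k n t R"
  obtains x where "is_fractional_matching k n t R x" and "sum x (gr_edges k t) = (\<Sum>i<k. lam i)"
proof -
  obtain lij where nonneg: "\<forall>i<k. \<forall>j<t i. lij i j \<ge> 0"
    and lam_eq: "\<forall>i<k. (\<Sum>j<t i. lij i j) = lam i"
    and server_load: "\<forall>l<n. (\<Sum>i<k. \<Sum>j\<in>{j. j < t i \<and> l \<in> R i j}. lij i j) \<le> 1"
    using lam unfolding service_rate_region_def by blast
  define x where "x = (\<lambda>e. lij (fst e) (snd e))"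
  have at_server: "sum x {e \<in> gr_edges k t. Inl l \<in> gr_ends R e} \<le> 1" if "l < n" for l
    using server_load that by (simp add: sum_edges_at_server x_def)
  have x_bounds: "0 \<le> x e \<and> x e \<le> 1" if e: "e \<in> gr_edges k t" for e
  proof -
    obtain i j where ij: "e = (i, j)" "i < k" "j < t i"
      using e by (auto simp: gr_edges_def)
    then obtain l where l: "l \<in> R i j" "l < n"
      using servers by blast
    have "x e \<le> sum x {e \<in> gr_edges k t. Inl l \<in> gr_ends R e}"
      by (rule member_le_sum) (use e ij l nonneg in \<open>auto simp: x_def gr_edges_eq_Sigma Inl_in_gr_ends_iff\<close>)
    also have "\<dots> \<le> 1"
      using at_server l by blast
    finally show ?thesis
      using nonneg ij by (simp add: x_def)
  qed
  show thesis
  proof (rule that)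
    show "is_fractional_matching k n t R x"
      unfolding is_fractional_matching_def
    proof (intro conjI ballI)
      fix v
      assume v: "v \<in> gr_vertices k n t R"
      show "sum x {e \<in> gr_edges k t. v \<in> gr_ends R e} \<le> 1"
      proof (cases v)
        case (Inl l)
        then show ?thesis
          using v at_server by (auto simp: gr_vertices_def)
      next
        case (Inr e')
        then show ?thesis
          using v x_bounds edges_at_dummy_vertex[of e' k n t R] by (auto simp: gr_vertices_def)
      qed
    qed (use x_bounds in auto)
    show "sum x (gr_edges k t) = (\<Sum>i<k. lam i)"
      using lam_eq by (simp add: sum_gr_edges x_def)
  qed
qed

lemma service_capacity_eq_fractional_matching_number:
  assumes "\<And>i j. i < k \<Longrightarrow> j < t i \<Longrightarrow> R i j \<noteq> {} \<and> R i j \<subseteq> {..<n}"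
  shows "service_capacity k n t R = fractional_matching_number k n t R"
proof -
  have "(\<exists>lam\<in>service_rate_region k n t R. s = (\<Sum>i<k. lam i)) \<longleftrightarrow>
        (\<exists>x. is_fractional_matching k n t R x \<and> s = sum x (gr_edges k t))" for s
  proof
    assume "\<exists>lam\<in>service_rate_region k n t R. s = (\<Sum>i<k. lam i)"
    then obtain lam where lam: "lam \<in> service_rate_region k n t R" and "s = (\<Sum>i<k. lam i)"
      by blast
    moreover obtain x where "is_fractional_matching k n t R x"
      and "sum x (gr_edges k t) = (\<Sum>i<k. lam i)"
      using fractional_matching_of_service_rates[OF assms lam] .
    ultimately show "\<exists>x. is_fractional_matching k n t R x \<and> s = sum x (gr_edges k t)"
      by auto
  next
    assume "\<exists>x. is_fractional_matching k n t R x \<and> s = sum x (gr_edges k t)"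
    then obtain x where "is_fractional_matching k n t R x" and "s = sum x (gr_edges k t)"
      by blast
    then show "\<exists>lam\<in>service_rate_region k n t R. s = (\<Sum>i<k. lam i)"
      using service_rates_of_fractional_matching by (auto simp: sum_gr_edges)
  qed
  then show ?thesis
    unfolding service_capacity_def fractional_matching_number_def by simp
qed

lemma matching_is_fractional_matching:
  assumes "is_matching k t R M"
  shows "is_fractional_matching k n t R (\<lambda>e. if e \<in> M then 1 else 0)"
  unfolding is_fractional_matching_def
proof (intro conjI ballI)
  fix v
  let ?A = "{e \<in> gr_edges k t. v \<in> gr_ends R e}"
  have "finite (?A \<inter> M)"
    using finite_gr_edges by simp
  moreover have "\<forall>a\<in>?A \<inter> M. \<forall>b\<in>?A \<inter> M. a = b"
    using assms unfolding is_matching_def by blast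
  ultimately have "card (?A \<inter> M) \<le> 1"
    by (simp add: card_le_Suc0_iff_eq)
  then show "(\<Sum>e\<in>?A. if e \<in> M then 1 else 0) \<le> (1::real)"
    using finite_gr_edges by (simp add: sum.If_cases)
qed auto

lemma matching_number_le_fractional_matching_number:
  "real (matching_number k t R) \<le> fractional_matching_number k n t R"
proof -
  let ?sizes = "{card M | M. is_matching k t R M}"
  have "?sizes \<subseteq> card ` Pow (gr_edges k t)"
    by (auto simp: is_matching_def)
  then have "finite ?sizes"
    by (rule finite_subset) (simp add: finite_gr_edges)
  moreover have "?sizes \<noteq> {}"
    using is_matching_def[of k t R "{}"] by auto
  ultimately have "Max ?sizes \<in> ?sizes"
    by (rule Max_in)
  then obtain M where M: "is_matching k t R M" and size: "matching_number k t R = card M"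
    unfolding matching_number_def by auto
  have "real (card M) = (\<Sum>e\<in>gr_edges k t. if e \<in> M then 1 else 0)"
    using M finite_gr_edges by (simp add: sum.If_cases is_matching_def Int_absorb1)
  also have "\<dots> \<le> fractional_matching_number k n t R"
    by (intro sum_le_fractional_matching_number matching_is_fractional_matching M)
  finally show ?thesis
    by (simp add: size)
qed

text \<open>Weak LP duality: each edge meets the cover, so summing the vertex constraints over the
  cover counts every edge weight at least once.\<close>

lemma fractional_matching_le_vertex_cover:
  assumes x: "is_fractional_matching k n t R x" and C: "is_vertex_cover k n t R C"
  shows "sum x (gr_edges k t) \<le> card C"
proof -
  let ?E = "gr_edges k t"
  have C_vertices: "C \<subseteq> gr_vertices k n t R"
    using C by (simp add: is_vertex_cover_def)
  then have "finite C"
    using finite_gr_vertices finite_subset by blast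
  have "sum x ?E \<le> (\<Sum>e\<in>?E. \<Sum>v\<in>C. if v \<in> gr_ends R e then x e else 0)"
  proof (rule sum_mono)
    fix e
    assume e: "e \<in> ?E"
    then obtain v where "v \<in> C" "v \<in> gr_ends R e"
      using C by (auto simp: is_vertex_cover_def)
    moreover have "0 \<le> x e"
      using x e by (simp add: is_fractional_matching_def)
    ultimately show "x e \<le> (\<Sum>v\<in>C. if v \<in> gr_ends R e then x e else 0)"
      using member_le_sum[of v C "\<lambda>v. if v \<in> gr_ends R e then x e else 0"] \<open>finite C\<close>
      by simp
  qed
  also have "\<dots> = (\<Sum>v\<in>C. sum x {e \<in> ?E. v \<in> gr_ends R e})"
    by (subst sum.swap) (simp add: sum.inter_filter finite_gr_edges)
  also have "\<dots> \<le> (\<Sum>v\<in>C. 1)"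
    using x C_vertices by (intro sum_mono) (auto simp: is_fractional_matching_def)
  finally show ?thesis
    by simp
qed

lemma gr_vertices_is_vertex_cover:
  assumes "\<And>i j. i < k \<Longrightarrow> j < t i \<Longrightarrow> R i j \<noteq> {} \<and> R i j \<subseteq> {..<n}"
  shows "is_vertex_cover k n t R (gr_vertices k n t R)"
  unfolding is_vertex_cover_def
proof (intro conjI ballI)
  fix e
  assume e: "e \<in> gr_edges k t"
  then obtain l where "l \<in> R (fst e) (snd e)" "l < n"
    using assms by (force simp: gr_edges_def)
  then have "Inl l \<in> gr_ends R e \<inter> gr_vertices k n t R"
    by (simp add: Inl_in_gr_ends_iff gr_vertices_def)
  then show "gr_ends R e \<inter> gr_vertices k n t R \<noteq> {}"
    by blast
qed simp

lemma fractional_matching_number_le_vertex_cover_number: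
  assumes "\<And>i j. i < k \<Longrightarrow> j < t i \<Longrightarrow> R i j \<noteq> {} \<and> R i j \<subseteq> {..<n}"
  shows "fractional_matching_number k n t R \<le> real (vertex_cover_number k n t R)"
proof -
  let ?sizes = "{card C | C. is_vertex_cover k n t R C}"
  have "?sizes \<subseteq> card ` Pow (gr_vertices k n t R)"
    by (auto simp: is_vertex_cover_def)
  then have "finite ?sizes"
    by (rule finite_subset) (simp add: finite_gr_vertices)
  moreover have "is_vertex_cover k n t R (gr_vertices k n t R)"
    using assms by (rule gr_vertices_is_vertex_cover)
  then have "?sizes \<noteq> {}"
    by auto
  ultimately have "Min ?sizes \<in> ?sizes"
    by (rule Min_in)
  then obtain C where C: "is_vertex_cover k n t R C" and "vertex_cover_number k n t R = card C"
    unfolding vertex_cover_number_def by auto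
  moreover obtain x where x: "is_fractional_matching k n t R x"
    and "fractional_matching_number k n t R = sum x (gr_edges k t)"
    using fractional_matching_number_attained[of k n t R] by blast
  ultimately show ?thesis
    using fractional_matching_le_vertex_cover[OF x C] by simp
qed

theorem theorem2:
  fixes Gm :: "nat \<Rightarrow> nat \<Rightarrow> 'a::{finite,field}"
    and k n :: nat and t :: "nat \<Rightarrow> nat" and R :: "nat \<Rightarrow> nat \<Rightarrow> nat set"
  assumes "generator_matrix k n Gm"
    and "\<forall>i<k. t i \<ge> 1"
    and "\<forall>i<k. \<forall>j<t i. is_recovery_set k n Gm i (R i j)"
    and "\<forall>i<k. \<forall>j<t i. card (R i j) = 1 \<or> card (R i j) = 2"
  shows "real (matching_number k t R) \<le> service_capacity k n t R
       \<and> service_capacity k n t R = fractional_matching_number k n t R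
       \<and> fractional_matching_number k n t R \<le> real (vertex_cover_number k n t R)"
proof -
  \<comment> \<open>only this consequence of the coding hypotheses is needed\<close>
  have servers: "R i j \<noteq> {} \<and> R i j \<subseteq> {..<n}" if "i < k" "j < t i" for i j
    using assms(3,4) that by (fastforce simp: is_recovery_set_def)
  have "service_capacity k n t R = fractional_matching_number k n t R"
    using servers by (rule service_capacity_eq_fractional_matching_number)
  moreover have "fractional_matching_number k n t R \<le> real (vertex_cover_number k n t R)"
    using servers by (rule fractional_matching_number_le_vertex_cover_number)
  ultimately show ?thesis
    using matching_number_le_fractional_matching_number by simp
qed

end
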